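(* $\{\omega^2, (\omega^2)^\star\} \leq_c \{\omega^3, (\omega^3)^\star\}$.
   Context: Structures have domains contained in $\omega$. For countable structures $\mathcal{A},\mathcal{B}$, the class $\{\mathcal{A},\mathcal{B}\}$ denotes the class of all structures (with domain $\subseteq\omega$) isomorphic to $\mathcal{A}$ or to $\mathcal{B}$. Linear orders are in the language $\{<\}$; $L^\star$ is the reverse of a linear order $L$; $\omega^2$, $\omega^3$ are ordinal order types. An enumeration operator $\Gamma$ is a c.e. set of pairs $(\alpha,\varphi)$ with $\alpha$ a finite set of basic (atomic or negated atomic) sentences of the input language with constants from $\omega$ and $\varphi$ a basic sentence of the output language with constants from $\omega$; $\Gamma(X)=\{\varphi : (\alpha,\varphi)\in\Gamma,\ \alpha\subseteq X\}$. $\Gamma$ is a computable embedding of $\mathcal{K}_0$ into $\mathcal{K}_1$ ($\mathcal{K}_0\leq_c\mathcal{K}_1$) if for every $\mathcal{A}\in\mathcal{K}_0$, $\Gamma$ applied to the atomic diagram of $\mathcal{A}$ is the atomic diagram of a structure $\Gamma(\mathcal{A})\in\mathcal{K}_1$, and for all $\mathcal{A},\mathcal{B}\in\mathcal{K}_0$, $\mathcal{A}\cong\mathcal{B}$ iff $\Gamma(\mathcal{A})\cong\Gamma(\mathcal{B})$. *)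

theory Defs
  imports Main "HOL-Library.Nat_Bijection"
begin

datatype recf =
    Zero
  | Succ
  | Proj nat
  | Comp recf "recf list"
  | Prim recf recf
  | Mu recf

inductive reval :: "recf \<Rightarrow> nat list \<Rightarrow> nat \<Rightarrow> bool" where
  reval_zero: "reval Zero xs 0"
| reval_succ: "reval Succ (x # xs) (Suc x)"
| reval_proj: "i < length xs \<Longrightarrow> reval (Proj i) xs (xs ! i)"
| reval_comp: "length ys = length gs \<Longrightarrow> (\<forall>i. i < length gs \<longrightarrow> reval (gs ! i) xs (ys ! i))
     \<Longrightarrow> reval f ys z \<Longrightarrow> reval (Comp f gs) xs z"
| reval_prim0: "reval f xs y \<Longrightarrow> reval (Prim f g) (0 # xs) y"
| reval_primS: "reval (Prim f g) (n # xs) y \<Longrightarrow> reval g (n # y # xs) z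
     \<Longrightarrow> reval (Prim f g) (Suc n # xs) z"
| reval_mu: "reval f (n # xs) 0 \<Longrightarrow> (\<forall>m. m < n \<longrightarrow> (\<exists>y. reval f (m # xs) y \<and> 0 < y))
     \<Longrightarrow> reval (Mu f) xs n"

definition ce_set :: "nat set \<Rightarrow> bool" where
  "ce_set A \<longleftrightarrow> (\<exists>f. A = {n. \<exists>y. reval f [n] y})"

datatype atom = Lt nat nat | Eq nat nat
datatype basic = Pos atom | Neg atom

fun code_atom :: "atom \<Rightarrow> nat" where
  "code_atom (Lt a b) = 2 * prod_encode (a, b)"
| "code_atom (Eq a b) = 2 * prod_encode (a, b) + 1"

fun code_basic :: "basic \<Rightarrow> nat" where
  "code_basic (Pos x) = 2 * code_atom x"
| "code_basic (Neg x) = 2 * code_atom x + 1"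

definition canon :: "nat set \<Rightarrow> nat" where
  "canon S = (\<Sum>x\<in>S. 2 ^ x)"

text \<open>A structure is a pair (D, R): domain D \<subseteq> omega and interpretation R of <, with R \<subseteq> D \<times> D.\<close>
type_synonym struc = "nat set \<times> (nat \<times> nat) set"

definition is_struc :: "struc \<Rightarrow> bool" where
  "is_struc A \<longleftrightarrow> snd A \<subseteq> fst A \<times> fst A"

definition iso :: "struc \<Rightarrow> struc \<Rightarrow> bool" where
  "iso A B \<longleftrightarrow> (\<exists>f. bij_betw f (fst A) (fst B) \<and>
     (\<forall>a\<in>fst A. \<forall>b\<in>fst A. (a, b) \<in> snd A \<longleftrightarrow> (f a, f b) \<in> snd B))"

definition diag :: "struc \<Rightarrow> basic set" where
  "diag A = {Pos (Lt a b) | a b. a \<in> fst A \<and> b \<in> fst A \<and> (a, b) \<in> snd A}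
          \<union> {Neg (Lt a b) | a b. a \<in> fst A \<and> b \<in> fst A \<and> (a, b) \<notin> snd A}
          \<union> {Pos (Eq a a) | a. a \<in> fst A}
          \<union> {Neg (Eq a b) | a b. a \<in> fst A \<and> b \<in> fst A \<and> a \<noteq> b}"

definition class2 :: "struc \<Rightarrow> struc \<Rightarrow> struc set" where
  "class2 A B = {C. is_struc C \<and> (iso C A \<or> iso C B)}"

type_synonym enum_op = "(basic set \<times> basic) set"

definition enum_operator :: "enum_op \<Rightarrow> bool" where
  "enum_operator \<Gamma> \<longleftrightarrow> (\<forall>(\<alpha>, \<phi>) \<in> \<Gamma>. finite \<alpha>) \<and>
     ce_set ((\<lambda>(\<alpha>, \<phi>). prod_encode (canon (code_basic ` \<alpha>), code_basic \<phi>)) ` \<Gamma>)"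

definition apply_op :: "enum_op \<Rightarrow> basic set \<Rightarrow> basic set" where
  "apply_op \<Gamma> X = {\<phi>. \<exists>\<alpha>. (\<alpha>, \<phi>) \<in> \<Gamma> \<and> \<alpha> \<subseteq> X}"

definition computable_embedding :: "enum_op \<Rightarrow> struc set \<Rightarrow> struc set \<Rightarrow> bool" where
  "computable_embedding \<Gamma> K0 K1 \<longleftrightarrow> enum_operator \<Gamma> \<and>
     (\<forall>A\<in>K0. \<exists>C\<in>K1. apply_op \<Gamma> (diag A) = diag C) \<and>
     (\<forall>A\<in>K0. \<forall>B\<in>K0. \<forall>CA\<in>K1. \<forall>CB\<in>K1.
        apply_op \<Gamma> (diag A) = diag CA \<longrightarrow> apply_op \<Gamma> (diag B) = diag CB \<longrightarrow>
        (iso A B \<longleftrightarrow> iso CA CB))"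

definition c_reducible :: "struc set \<Rightarrow> struc set \<Rightarrow> bool" (infix "\<le>\<^sub>c" 50) where
  "K0 \<le>\<^sub>c K1 \<longleftrightarrow> (\<exists>\<Gamma>. computable_embedding \<Gamma> K0 K1)"

definition omega2 :: struc where
  "omega2 = (UNIV, {(a, b). let (m1, n1) = prod_decode a; (m2, n2) = prod_decode b
                             in m1 < m2 \<or> (m1 = m2 \<and> n1 < n2)})"

fun dec3 :: "nat \<Rightarrow> nat \<times> nat \<times> nat" where
  "dec3 a = (let (m, k) = prod_decode a in (m, prod_decode k))"

definition omega3 :: struc where
  "omega3 = (UNIV, {(a, b). let (m1, n1, p1) = dec3 a; (m2, n2, p2) = dec3 b
                             in m1 < m2 \<or> (m1 = m2 \<and> (n1 < n2 \<or> (n1 = n2 \<and> p1 < p2)))})"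

definition reverse :: "struc \<Rightarrow> struc" where
  "reverse A = (fst A, {(b, a). (a, b) \<in> snd A})"

end

theory Submission
  imports Defs
begin

text \<open>
  The operator sends a linear order \<open>A\<close> to the lexicographically ordered set of pairs \<open>(a, w)\<close>
  such that \<open>w\<close> lies strictly between \<open>a\<close> and some \<open>t\<close> that is numerically smaller than \<open>a\<close>.
  Each output fact needs only finitely many positive facts \<open>x < y\<close> of \<open>A\<close> (the negative ones follow
  from linearity), and membership in the operator is a bounded-quantifier arithmetic property, so it
  is c.e.

  If \<open>A \<cong> \<omega>\<^sup>2\<close>, view \<open>A\<close> as \<open>\<omega>\<close> blocks of type \<open>\<omega>\<close>. Taking for \<open>t\<close> the numerically least
  element \<open>d\<close>, every \<open>a\<close> two or more blocks above that of \<open>d\<close> is paired with the whole block in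
  between, which embeds \<open>\<omega>\<^sup>3\<close> into the image. Conversely, the partners of \<open>a\<close> lie in blocks no
  higher than the largest block of an element numerically \<open>\<le> a\<close>, so the pairs with first
  component \<open>a\<close> fit into finitely many copies of \<open>\<omega>\<close>, which embeds the image into \<open>\<omega>\<^sup>3\<close>. Mutually
  embeddable well-orders are isomorphic. The operator commutes with reversal, so \<open>(\<omega>\<^sup>2)\<^sup>*\<close> goes
  to \<open>(\<omega>\<^sup>3)\<^sup>*\<close>; since \<open>\<omega>\<^sup>k\<close> has a least element and its reverse does not, isomorphism
  is preserved and reflected on the class.
\<close>

section \<open>Semi-decidability of bounded arithmetic\<close>

inductive_cases reval_ZeroE: "reval Zero xs y"
inductive_cases reval_SuccE: "reval Succ xs y"
inductive_cases reval_ProjE: "reval (Proj i) xs y"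
inductive_cases reval_CompE: "reval (Comp f gs) xs y"
inductive_cases reval_Prim0E: "reval (Prim f g) (0 # xs) y"
inductive_cases reval_PrimSE: "reval (Prim f g) (Suc n # xs) y"
inductive_cases reval_MuE: "reval (Mu f) xs y"

lemma reval_deterministic: "reval f xs y \<Longrightarrow> reval f xs z \<Longrightarrow> y = z"
proof (induct arbitrary: z rule: reval.induct)
  case (reval_comp ys gs xs f z0 z)
  from reval_comp(5) obtain ys' where len: "length ys' = length gs"
    and args: "\<forall>i<length gs. reval (gs ! i) xs (ys' ! i)" and "reval f ys' z"
    by (auto elim: reval_CompE)
  moreover have "ys = ys'"
  proof (rule nth_equalityI)
    show "length ys = length ys'" using reval_comp(1) len by simp
    fix i assume "i < length ys"
    then have "i < length gs" using reval_comp(1) by simp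
    then show "ys ! i = ys' ! i" using reval_comp(2) args by blast
  qed
  ultimately show ?case using reval_comp(4) by blast
next
  case (reval_prim0 f xs y g z)
  from reval_prim0(3) have "reval f xs z" by (auto elim: reval_Prim0E)
  then show ?case using reval_prim0(2) by blast
next
  case (reval_primS f g n xs y z0 z)
  from reval_primS(5) obtain y' where "reval (Prim f g) (n # xs) y'" and "reval g (n # y' # xs) z"
    by (elim reval_PrimSE) auto
  moreover from reval_primS(2)[OF this(1)] have "y = y'" .
  ultimately show ?case using reval_primS(4) by blast
next
  case (reval_mu f n xs z)
  from reval_mu(4) have z: "reval f (z # xs) 0" and below_z: "\<forall>m<z. \<exists>y. reval f (m # xs) y \<and> 0 < y"
    by (auto elim: reval_MuE)
  show ?case
  proof (rule linorder_cases[of n z])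
    assume "n < z"
    with below_z obtain y where "reval f (n # xs) y" "0 < y" by blast
    with reval_mu(2) show ?thesis by (metis less_irrefl)
  next
    assume "z < n"
    with reval_mu(3) obtain y where "0 < y" "\<And>w. reval f (z # xs) w \<Longrightarrow> y = w"
      by blast
    with z show ?thesis by (metis less_irrefl)
  qed
qed (auto elim: reval_ZeroE reval_SuccE reval_ProjE)

lemma reval_CompI:
  "list_all2 (\<lambda>g y. reval g xs y) gs ys \<Longrightarrow> reval f ys z \<Longrightarrow> reval (Comp f gs) xs z"
  by (rule reval_comp) (auto simp: list_all2_conv_all_nth)

lemma reval_ProjI: "i < length xs \<Longrightarrow> y = xs ! i \<Longrightarrow> reval (Proj i) xs y"
  by (simp add: reval_proj)

lemma reval_Comp1I: "reval g xs y \<Longrightarrow> reval f [y] z \<Longrightarrow> reval (Comp f [g]) xs z"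
  by (rule reval_CompI[where ys = "[y]"]) auto

lemma reval_Comp2I:
  "reval g xs y \<Longrightarrow> reval h xs y' \<Longrightarrow> reval f [y, y'] z \<Longrightarrow> reval (Comp f [g, h]) xs z"
  by (rule reval_CompI[where ys = "[y, y']"]) auto

lemma list_all2_reval_Proj:
  "list_all2 (\<lambda>g y. reval g (pre @ xs) y) (map (\<lambda>j. Proj (j + length pre)) [0..<length xs]) xs"
  by (auto simp: list_all2_conv_all_nth nth_append intro!: reval_ProjI)

lemma list_all2_reval_Proj0: "list_all2 (\<lambda>g y. reval g xs y) (map Proj [0..<length xs]) xs"
  using list_all2_reval_Proj[of "[]" xs] by simp

definition plus_recf :: recf where
  "plus_recf = Prim (Proj 0) (Comp Succ [Proj 1])"

lemma reval_plus_recf: "reval plus_recf [n, x] (n + x)"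
  unfolding plus_recf_def
proof (induction n)
  case 0
  show ?case by (rule reval_prim0) (auto intro: reval_ProjI)
next
  case (Suc n)
  show ?case
    by (rule reval_primS[OF Suc]) (auto intro!: reval_Comp1I reval_ProjI reval_succ[of _ "[]", simplified])
qed

definition times_recf :: recf where
  "times_recf = Prim Zero (Comp plus_recf [Proj 2, Proj 1])"

lemma reval_times_recf: "reval times_recf [n, x] (n * x)"
  unfolding times_recf_def
proof (induction n)
  case 0
  show ?case by (rule reval_prim0) (auto intro: reval_zero)
next
  case (Suc n)
  show ?case
    by (rule reval_primS[OF Suc]) (auto intro!: reval_Comp2I reval_ProjI reval_plus_recf[of x "n * x", simplified])
qed

definition pred_recf :: recf where
  "pred_recf = Prim Zero (Proj 0)"

lemma reval_pred_recf: "reval pred_recf [n] (n - 1)"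
  unfolding pred_recf_def
proof (induction n)
  case 0
  show ?case by (rule reval_prim0) (auto intro: reval_zero)
next
  case (Suc n)
  show ?case by (rule reval_primS[OF Suc]) (auto intro: reval_ProjI)
qed

definition minus_recf :: recf where
  "minus_recf = Prim (Proj 0) (Comp pred_recf [Proj 1])"

lemma reval_minus_recf: "reval minus_recf [n, x] (x - n)"
  unfolding minus_recf_def
proof (induction n)
  case 0
  show ?case by (rule reval_prim0) (auto intro: reval_ProjI)
next
  case (Suc n)
  show ?case
    by (rule reval_primS[OF Suc]) (auto intro!: reval_Comp1I reval_ProjI reval_pred_recf[of "x - n", simplified])
qed

fun const_recf :: "nat \<Rightarrow> recf" where
  "const_recf 0 = Zero"
| "const_recf (Suc n) = Comp Succ [const_recf n]"

lemma reval_const_recf: "reval (const_recf n) xs n"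
  by (induction n) (auto intro: reval_zero reval_Comp1I reval_succ[of _ "[]", simplified])

definition sgn_recf :: recf where
  "sgn_recf = Prim Zero (const_recf 1)"

lemma reval_sgn_recf: "reval sgn_recf [n] (of_bool (n \<noteq> 0))"
  unfolding sgn_recf_def
proof (induction n)
  case 0
  show ?case by (auto intro: reval_prim0 reval_zero)
next
  case (Suc n)
  show ?case using reval_primS[OF Suc reval_const_recf] by simp
qed

definition triangle_recf :: recf where
  "triangle_recf = Prim Zero (Comp plus_recf [Proj 1, Comp Succ [Proj 0]])"

lemma reval_triangle_recf: "reval triangle_recf [n] (triangle n)"
  unfolding triangle_recf_def
proof (induction n)
  case 0
  show ?case by (rule reval_prim0) (auto intro: reval_zero)
next
  case (Suc n)
  have succ: "reval (Comp Succ [Proj 0]) [n, triangle n] (Suc n)"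
    by (rule reval_Comp1I[OF reval_ProjI]) (auto intro: reval_succ[of _ "[]", simplified])
  have "reval (Comp plus_recf [Proj 1, Comp Succ [Proj 0]]) [n, triangle n] (triangle (Suc n))"
    using reval_Comp2I[OF reval_proj[of 1 "[n, triangle n]"] succ reval_plus_recf] by simp
  from reval_primS[OF Suc this] show ?case .
qed

definition pow2_recf :: recf where
  "pow2_recf = Prim (const_recf 1) (Comp plus_recf [Proj 1, Proj 1])"

lemma reval_pow2_recf: "reval pow2_recf [n] (2 ^ n)"
  unfolding pow2_recf_def
proof (induction n)
  case 0
  show ?case using reval_prim0[OF reval_const_recf[of 1 "[]"]] by simp
next
  case (Suc n)
  have "reval (Comp plus_recf [Proj 1, Proj 1]) [n, 2 ^ n] (2 ^ Suc n)"
    using reval_Comp2I[OF reval_proj[of 1 "[n, 2 ^ n]"] reval_proj[of 1 "[n, 2 ^ n]"] reval_plus_recf]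
    by (simp add: mult_2)
  from reval_primS[OF Suc this] show ?case .
qed

text \<open>Variables are positions in the argument list; \<open>Bex b e\<close> binds a new variable,
  ranging over \<open>0..b\<close>, as the last position.\<close>
datatype nexp =
    Var nat | Const nat | Plus nexp nexp | Times nexp nexp | Minus nexp nexp
  | Triangle nexp | Pow2 nexp | Sgn nexp | Bex nexp nexp

fun nval :: "nexp \<Rightarrow> nat list \<Rightarrow> nat" where
  "nval (Var i) xs = xs ! i"
| "nval (Const n) xs = n"
| "nval (Plus a b) xs = nval a xs + nval b xs"
| "nval (Times a b) xs = nval a xs * nval b xs"
| "nval (Minus a b) xs = nval a xs - nval b xs"
| "nval (Triangle a) xs = triangle (nval a xs)"
| "nval (Pow2 a) xs = 2 ^ nval a xs"
| "nval (Sgn a) xs = of_bool (nval a xs \<noteq> 0)"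
| "nval (Bex b e) xs = of_bool (\<exists>i\<le>nval b xs. nval e (xs @ [i]) \<noteq> 0)"

definition holds :: "nexp \<Rightarrow> nat list \<Rightarrow> bool" where
  "holds e xs \<longleftrightarrow> nval e xs \<noteq> 0"

fun wf_nexp :: "nat \<Rightarrow> nexp \<Rightarrow> bool" where
  "wf_nexp k (Var i) = (i < k)"
| "wf_nexp k (Const n) = True"
| "wf_nexp k (Plus a b) = (wf_nexp k a \<and> wf_nexp k b)"
| "wf_nexp k (Times a b) = (wf_nexp k a \<and> wf_nexp k b)"
| "wf_nexp k (Minus a b) = (wf_nexp k a \<and> wf_nexp k b)"
| "wf_nexp k (Triangle a) = wf_nexp k a"
| "wf_nexp k (Pow2 a) = wf_nexp k a"
| "wf_nexp k (Sgn a) = wf_nexp k a"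
| "wf_nexp k (Bex b e) = (wf_nexp k b \<and> wf_nexp (Suc k) e)"

definition bex_recf :: "nat \<Rightarrow> recf \<Rightarrow> recf" where
  "bex_recf k E = Prim
     (Comp sgn_recf [Comp E (map Proj [0..<k] @ [Zero])])
     (Comp sgn_recf [Comp plus_recf [Proj 1, Comp E (map (\<lambda>j. Proj (j + 2)) [0..<k] @ [Comp Succ [Proj 0]])]])"

lemma reval_bex_recf:
  assumes E: "\<And>ys. length ys = Suc (length xs) \<Longrightarrow> reval E ys (f ys)"
  shows "reval (bex_recf (length xs) E) (n # xs) (of_bool (\<exists>i\<le>n. f (xs @ [i]) \<noteq> 0))"
proof (induction n)
  case 0
  have "reval (Comp E (map Proj [0..<length xs] @ [Zero])) xs (f (xs @ [0]))"
    by (rule reval_CompI[OF _ E]) (auto intro!: list_all2_appendI list_all2_reval_Proj0 reval_zero)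
  then have "reval (Comp sgn_recf [Comp E (map Proj [0..<length xs] @ [Zero])]) xs (of_bool (f (xs @ [0]) \<noteq> 0))"
    by (rule reval_Comp1I[OF _ reval_sgn_recf])
  then show ?case unfolding bex_recf_def by (auto intro: reval_prim0)
next
  case (Suc n)
  let ?step = "Comp plus_recf [Proj 1, Comp E (map (\<lambda>j. Proj (j + 2)) [0..<length xs] @ [Comp Succ [Proj 0]])]"
  have "reval (Comp E (map (\<lambda>j. Proj (j + 2)) [0..<length xs] @ [Comp Succ [Proj 0]])) (n # y # xs)
      (f (xs @ [Suc n]))" for y
    by (rule reval_CompI[OF _ E])
      (auto intro!: list_all2_appendI list_all2_reval_Proj[of "[n, y]", simplified]
        reval_Comp1I[OF reval_ProjI] intro: reval_succ[of n "[]", simplified])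
  then have "reval ?step (n # y # xs) (y + f (xs @ [Suc n]))" for y
    by (intro reval_Comp2I[OF reval_ProjI _ reval_plus_recf]) simp_all
  then have step: "reval (Comp sgn_recf [?step]) (n # y # xs) (of_bool (y + f (xs @ [Suc n]) \<noteq> 0))" for y
    by (rule reval_Comp1I[OF _ reval_sgn_recf])
  have "of_bool (of_bool (\<exists>i\<le>n. f (xs @ [i]) \<noteq> 0) + f (xs @ [Suc n]) \<noteq> 0)
      = (of_bool (\<exists>i\<le>Suc n. f (xs @ [i]) \<noteq> 0) :: nat)"
    by (auto simp: le_Suc_eq)
  with reval_primS[OF Suc[unfolded bex_recf_def] step] show ?case
    unfolding bex_recf_def by simp
qed

fun compile :: "nat \<Rightarrow> nexp \<Rightarrow> recf" where
  "compile k (Var i) = Proj i"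
| "compile k (Const n) = const_recf n"
| "compile k (Plus a b) = Comp plus_recf [compile k a, compile k b]"
| "compile k (Times a b) = Comp times_recf [compile k a, compile k b]"
| "compile k (Minus a b) = Comp minus_recf [compile k b, compile k a]"
| "compile k (Triangle a) = Comp triangle_recf [compile k a]"
| "compile k (Pow2 a) = Comp pow2_recf [compile k a]"
| "compile k (Sgn a) = Comp sgn_recf [compile k a]"
| "compile k (Bex b e) = Comp (bex_recf k (compile (Suc k) e)) (compile k b # map Proj [0..<k])"

lemma reval_compile: "wf_nexp (length xs) e \<Longrightarrow> reval (compile (length xs) e) xs (nval e xs)"
proof (induction e arbitrary: xs)
  case (Sgn a)
  then show ?case
    unfolding compile.simps nval.simps by (intro reval_Comp1I[OF _ reval_sgn_recf]) simp
next
  case (Bex b e)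
  have "reval (compile (length xs) b) xs (nval b xs)"
    using Bex.IH(1) Bex.prems by simp
  moreover have "reval (compile (Suc (length xs)) e) ys (nval e ys)" if "length ys = Suc (length xs)" for ys
    using Bex.IH(2)[of ys] Bex.prems that by simp
  then have "reval (bex_recf (length xs) (compile (Suc (length xs)) e)) (nval b xs # xs) (nval (Bex b e) xs)"
    using reval_bex_recf by simp
  ultimately show ?case
    by (auto intro!: reval_CompI[where ys = "nval b xs # xs"] list_all2_reval_Proj0 simp del: nval.simps)
qed (auto intro!: reval_CompI reval_ProjI reval_const_recf reval_plus_recf reval_times_recf
  reval_minus_recf reval_triangle_recf reval_pow2_recf)

lemma ce_set_holds:
  assumes "wf_nexp 1 e"
  shows "ce_set {n. holds e [n]}"
proof -
  define g where "g = Comp (compile 1 (Minus (Const 1) (Sgn e))) [Proj 1]"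
  have g: "reval g [m, n] (of_bool (nval e [n] = 0))" for m n
    unfolding g_def
    by (rule reval_Comp1I[OF reval_ProjI]) (use reval_compile[of "[n]" "Minus (Const 1) (Sgn e)"] assms in auto)
  have "{n. nval e [n] \<noteq> 0} = {n. \<exists>y. reval (Mu g) [n] y}"
  proof (intro set_eqI iffI; simp)
    fix n
    assume "0 < nval e [n]"
    then have "reval (Mu g) [n] 0" using g[of 0 n] by (intro reval_mu) auto
    then show "\<exists>y. reval (Mu g) [n] y" by blast
  next
    fix n
    assume "\<exists>y. reval (Mu g) [n] y"
    then obtain y where "reval g [y, n] 0" by (auto elim: reval_MuE)
    with g[of y n] show "0 < nval e [n]" using reval_deterministic by fastforce
  qed
  then show ?thesis unfolding ce_set_def holds_def by blast
qed

abbreviation Conj :: "nexp \<Rightarrow> nexp \<Rightarrow> nexp" where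
  "Conj \<equiv> Times"

abbreviation Disj :: "nexp \<Rightarrow> nexp \<Rightarrow> nexp" where
  "Disj \<equiv> Plus"

definition Less :: "nexp \<Rightarrow> nexp \<Rightarrow> nexp" where
  "Less a b = Sgn (Minus b a)"

definition Equal :: "nexp \<Rightarrow> nexp \<Rightarrow> nexp" where
  "Equal a b = Minus (Const 1) (Plus (Minus a b) (Minus b a))"

definition Pair :: "nexp \<Rightarrow> nexp \<Rightarrow> nexp" where
  "Pair a b = Plus (Triangle (Plus a b)) a"

lemma holds_simps [simp]:
  "holds (Conj a b) xs \<longleftrightarrow> holds a xs \<and> holds b xs"
  "holds (Disj a b) xs \<longleftrightarrow> holds a xs \<or> holds b xs"
  "holds (Less a b) xs \<longleftrightarrow> nval a xs < nval b xs"
  "holds (Equal a b) xs \<longleftrightarrow> nval a xs = nval b xs"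
  "holds (Bex b e) xs \<longleftrightarrow> (\<exists>i\<le>nval b xs. holds e (xs @ [i]))"
  by (auto simp: holds_def Less_def Equal_def)

lemma nval_Pair [simp]: "nval (Pair a b) xs = prod_encode (nval a xs, nval b xs)"
  by (simp add: Pair_def prod_encode_def)

lemma wf_nexp_derived [simp]:
  "wf_nexp k (Less a b) \<longleftrightarrow> wf_nexp k a \<and> wf_nexp k b"
  "wf_nexp k (Equal a b) \<longleftrightarrow> wf_nexp k a \<and> wf_nexp k b"
  "wf_nexp k (Pair a b) \<longleftrightarrow> wf_nexp k a \<and> wf_nexp k b"
  by (auto simp: Less_def Equal_def Pair_def)

lemma wf_nexp_mono: "wf_nexp k e \<Longrightarrow> k \<le> k' \<Longrightarrow> wf_nexp k' e"
  by (induction e arbitrary: k k') auto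

fun qfree :: "nexp \<Rightarrow> bool" where
  "qfree (Bex b e) = False"
| "qfree (Plus a b) = (qfree a \<and> qfree b)"
| "qfree (Times a b) = (qfree a \<and> qfree b)"
| "qfree (Minus a b) = (qfree a \<and> qfree b)"
| "qfree (Triangle a) = qfree a"
| "qfree (Pow2 a) = qfree a"
| "qfree (Sgn a) = qfree a"
| "qfree _ = True"

lemma qfree_Pair [simp]: "qfree (Pair a b) \<longleftrightarrow> qfree a \<and> qfree b"
  by (auto simp: Pair_def)

lemma nval_append: "wf_nexp (length xs) e \<Longrightarrow> qfree e \<Longrightarrow> nval e (xs @ ys) = nval e xs"
  by (induction e) (auto simp: nth_append)

lemma mem_set_decode_iff:
  "k \<in> set_decode c \<longleftrightarrow> (\<exists>q\<le>c. \<exists>r\<le>c. c = (2 * q + 1) * 2 ^ k + r \<and> r < 2 ^ k)"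
proof
  assume "k \<in> set_decode c"
  then have "odd (c div 2 ^ k)" by (simp add: set_decode_def)
  then have "c div 2 ^ k = 2 * (c div 2 ^ k div 2) + 1" by simp
  moreover have "c = c div 2 ^ k * 2 ^ k + c mod 2 ^ k" by (rule div_mult_mod_eq[symmetric])
  ultimately have "c = (2 * (c div 2 ^ k div 2) + 1) * 2 ^ k + c mod 2 ^ k" by simp
  moreover have "c div 2 ^ k div 2 \<le> c" by (meson div_le_dividend order_trans)
  ultimately show "\<exists>q\<le>c. \<exists>r\<le>c. c = (2 * q + 1) * 2 ^ k + r \<and> r < 2 ^ k"
    by (metis mod_less_divisor mod_less_eq_dividend zero_less_numeral zero_less_power)
next
  assume "\<exists>q\<le>c. \<exists>r\<le>c. c = (2 * q + 1) * 2 ^ k + r \<and> r < 2 ^ k"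
  then obtain q r where "c = (2 * q + 1) * 2 ^ k + r" and "r < 2 ^ k" by blast
  then have "c div 2 ^ k = 2 * q + 1 + r div 2 ^ k"
    using div_mult_self3[of "2 ^ k :: nat" "2 * q + 1" r] by simp
  with \<open>r < 2 ^ k\<close> have "c div 2 ^ k = 2 * q + 1" by simp
  then show "k \<in> set_decode c" by (simp add: set_decode_def)
qed

text \<open>\<open>Mem j K C\<close> expresses \<open>K \<in> set_decode C\<close> among \<open>j\<close> variables, binding the
  quotient and remainder of \<open>mem_set_decode_iff\<close> as variables \<open>j\<close> and \<open>j + 1\<close>.\<close>
definition Mem :: "nat \<Rightarrow> nexp \<Rightarrow> nexp \<Rightarrow> nexp" where
  "Mem j K C = Bex C (Bex C (Conj
     (Equal C (Plus (Times (Plus (Times (Const 2) (Var j)) (Const 1)) (Pow2 K)) (Var (Suc j))))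
     (Less (Var (Suc j)) (Pow2 K))))"

lemma wf_nexp_Mem [simp]: "j \<le> k \<Longrightarrow> wf_nexp k K \<Longrightarrow> wf_nexp k C \<Longrightarrow> wf_nexp k (Mem j K C)"
  using wf_nexp_mono[of k K] wf_nexp_mono[of k C] by (simp add: Mem_def)

lemma holds_Mem:
  assumes "length xs = j" "wf_nexp j K" "wf_nexp j C" "qfree K" "qfree C"
  shows "holds (Mem j K C) xs \<longleftrightarrow> nval K xs \<in> set_decode (nval C xs)"
proof -
  have "nval K (xs @ ys) = nval K xs" "nval C (xs @ ys) = nval C xs" for ys
    using assms nval_append by auto
  then show ?thesis
    unfolding Mem_def mem_set_decode_iff using assms by (simp add: nth_append)
qed

section \<open>The operator\<close>

definition between :: "nat rel \<Rightarrow> nat \<Rightarrow> nat \<Rightarrow> nat \<Rightarrow> bool" where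
  "between r t w a \<longleftrightarrow> (t, w) \<in> r \<and> (w, a) \<in> r \<or> (a, w) \<in> r \<and> (w, t) \<in> r"

definition admissible :: "nat rel \<Rightarrow> (nat \<times> nat) set" where
  "admissible r = {(a, w). \<exists>t<a. between r t w a}"

definition lex_pairs :: "nat rel \<Rightarrow> struc" where
  "lex_pairs r = (prod_encode ` admissible r,
     {(prod_encode p, prod_encode q) | p q. p \<in> admissible r \<and> q \<in> admissible r \<and> (p, q) \<in> r <*lex*> r})"

text \<open>A negated \<open><\<close> is asserted from a positive reason (reverse order or equality), so that the
  operator defined from it is monotone in its input.\<close>
definition lex_sentence :: "nat rel \<Rightarrow> nat \<times> nat \<Rightarrow> nat \<times> nat \<Rightarrow> basic \<Rightarrow> bool" where
  "lex_sentence r p q \<phi> \<longleftrightarrow>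
     \<phi> = Pos (Lt (prod_encode p) (prod_encode q)) \<and> (p, q) \<in> r <*lex*> r \<or>
     \<phi> = Neg (Lt (prod_encode p) (prod_encode q)) \<and> ((q, p) \<in> r <*lex*> r \<or> p = q) \<or>
     \<phi> = Pos (Eq (prod_encode p) (prod_encode q)) \<and> p = q \<or>
     \<phi> = Neg (Eq (prod_encode p) (prod_encode q)) \<and> p \<noteq> q"

definition gamma_sentence :: "nat rel \<Rightarrow> basic \<Rightarrow> bool" where
  "gamma_sentence r \<phi> \<longleftrightarrow> (\<exists>p\<in>admissible r. \<exists>q\<in>admissible r. lex_sentence r p q \<phi>)"

definition Gamma :: enum_op where
  "Gamma = {(\<alpha>, \<phi>). finite \<alpha> \<and> gamma_sentence {(x, y). Pos (Lt x y) \<in> \<alpha>} \<phi>}"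

lemma between_converse [simp]: "between (r\<inverse>) t w a \<longleftrightarrow> between r t w a"
  by (auto simp: between_def)

lemma admissible_converse [simp]: "admissible (r\<inverse>) = admissible r"
  by (simp add: admissible_def)

lemma admissible_Field: "p \<in> admissible r \<Longrightarrow> p \<in> Field r \<times> Field r"
  by (auto simp: admissible_def between_def intro: FieldI1 FieldI2)

lemma between_mono: "between r t w a \<Longrightarrow> r \<subseteq> s \<Longrightarrow> between s t w a"
  unfolding between_def by blast

lemma admissible_mono:
  assumes "r \<subseteq> s"
  shows "admissible r \<subseteq> admissible s"
  unfolding admissible_def using between_mono[OF _ assms] by blast

lemma lex_prod_mono: "(p, q) \<in> r <*lex*> r \<Longrightarrow> r \<subseteq> s \<Longrightarrow> (p, q) \<in> s <*lex*> s"
  by (cases p; cases q) auto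

lemma lex_sentence_mono:
  assumes "lex_sentence r p q \<phi>" "r \<subseteq> s"
  shows "lex_sentence s p q \<phi>"
  using assms(1) lex_prod_mono[OF _ assms(2)] unfolding lex_sentence_def by blast

lemma gamma_sentence_mono:
  assumes "gamma_sentence r \<phi>" "r \<subseteq> s"
  shows "gamma_sentence s \<phi>"
  using assms(1) admissible_mono[OF assms(2)] lex_sentence_mono[OF _ assms(2)]
  unfolding gamma_sentence_def by blast

lemma gamma_sentence_finite_support:
  assumes "gamma_sentence r \<phi>"
  shows "\<exists>r'. finite r' \<and> r' \<subseteq> r \<and> gamma_sentence r' \<phi>"
proof -
  from assms obtain a w t a' w' t' where "t < a" "between r t w a" "t' < a'" "between r t' w' a'"
    and lex: "lex_sentence r (a, w) (a', w') \<phi>"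
    unfolding gamma_sentence_def admissible_def by blast
  define V where "V = {a, w, t, a', w', t'}"
  have "between (r \<inter> V \<times> V) t w a" "between (r \<inter> V \<times> V) t' w' a'"
    using \<open>between r t w a\<close> \<open>between r t' w' a'\<close> unfolding between_def V_def by blast+
  with \<open>t < a\<close> \<open>t' < a'\<close> have "(a, w) \<in> admissible (r \<inter> V \<times> V)" "(a', w') \<in> admissible (r \<inter> V \<times> V)"
    unfolding admissible_def by blast+
  moreover have "lex_sentence (r \<inter> V \<times> V) (a, w) (a', w') \<phi>"
    using lex unfolding lex_sentence_def V_def by auto
  ultimately have "gamma_sentence (r \<inter> V \<times> V) \<phi>"
    unfolding gamma_sentence_def by blast
  moreover have "finite (r \<inter> V \<times> V)" by (simp add: V_def)
  ultimately show ?thesis by blast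
qed

lemma apply_op_Gamma: "apply_op Gamma X = {\<phi>. gamma_sentence {(x, y). Pos (Lt x y) \<in> X} \<phi>}"
proof (intro set_eqI iffI)
  fix \<phi>
  assume "\<phi> \<in> apply_op Gamma X"
  then obtain \<alpha> where "gamma_sentence {(x, y). Pos (Lt x y) \<in> \<alpha>} \<phi>" "\<alpha> \<subseteq> X"
    unfolding apply_op_def Gamma_def by auto
  then show "\<phi> \<in> {\<phi>. gamma_sentence {(x, y). Pos (Lt x y) \<in> X} \<phi>}"
    by (auto elim: gamma_sentence_mono)
next
  fix \<phi>
  assume "\<phi> \<in> {\<phi>. gamma_sentence {(x, y). Pos (Lt x y) \<in> X} \<phi>}"
  then obtain r where r: "finite r" "r \<subseteq> {(x, y). Pos (Lt x y) \<in> X}" "gamma_sentence r \<phi>"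
    using gamma_sentence_finite_support by blast
  define \<alpha> where "\<alpha> = (\<lambda>(x, y). Pos (Lt x y)) ` r"
  have "finite \<alpha>"
    using r(1) by (simp add: \<alpha>_def)
  moreover have "{(x, y). Pos (Lt x y) \<in> \<alpha>} = r"
    unfolding \<alpha>_def by auto
  ultimately have "(\<alpha>, \<phi>) \<in> Gamma"
    using r(3) by (simp add: Gamma_def)
  moreover have "\<alpha> \<subseteq> X"
    using r by (auto simp: \<alpha>_def)
  ultimately show "\<phi> \<in> apply_op Gamma X"
    unfolding apply_op_def by blast
qed

lemma Lt_pairs_diag: "is_struc A \<Longrightarrow> {(x, y). Pos (Lt x y) \<in> diag A} = snd A"
  by (auto simp: diag_def is_struc_def)

lemma not_in_lex_prod_iff:
  assumes "strict_linear_order_on (Field r) r" "p \<in> Field r \<times> Field r" "q \<in> Field r \<times> Field r"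
  shows "(p, q) \<notin> r <*lex*> r \<longleftrightarrow> (q, p) \<in> r <*lex*> r \<or> p = q"
  using assms unfolding strict_linear_order_on_def total_on_def irrefl_def trans_def lex_prod_def
  by auto

lemma mem_diag_iff:
  "\<phi> \<in> diag X \<longleftrightarrow> (\<exists>x\<in>fst X. \<exists>y\<in>fst X.
     \<phi> = Pos (Lt x y) \<and> (x, y) \<in> snd X \<or> \<phi> = Neg (Lt x y) \<and> (x, y) \<notin> snd X \<or>
     \<phi> = Pos (Eq x y) \<and> x = y \<or> \<phi> = Neg (Eq x y) \<and> x \<noteq> y)"
  by (auto simp: diag_def)

lemma fst_lex_pairs: "fst (lex_pairs r) = prod_encode ` admissible r"
  by (simp add: lex_pairs_def)

lemma is_struc_lex_pairs: "is_struc (lex_pairs r)"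
  by (auto simp: is_struc_def lex_pairs_def)

lemma mem_snd_lex_pairs:
  "(x, y) \<in> snd (lex_pairs r) \<longleftrightarrow>
    (\<exists>p\<in>admissible r. \<exists>q\<in>admissible r. x = prod_encode p \<and> y = prod_encode q \<and> (p, q) \<in> r <*lex*> r)"
  by (auto simp: lex_pairs_def)

lemma snd_lex_pairs_iff:
  "p \<in> admissible r \<Longrightarrow> q \<in> admissible r \<Longrightarrow>
    (prod_encode p, prod_encode q) \<in> snd (lex_pairs r) \<longleftrightarrow> (p, q) \<in> r <*lex*> r"
  by (cases p, cases q) (auto simp: lex_pairs_def prod_encode_eq)

lemma diag_lex_pairs:
  assumes "strict_linear_order_on (Field r) r"
  shows "diag (lex_pairs r) = {\<phi>. gamma_sentence r \<phi>}"
proof -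
  have "lex_sentence r p q \<phi> \<longleftrightarrow>
      \<phi> = Pos (Lt (prod_encode p) (prod_encode q)) \<and> (prod_encode p, prod_encode q) \<in> snd (lex_pairs r) \<or>
      \<phi> = Neg (Lt (prod_encode p) (prod_encode q)) \<and> (prod_encode p, prod_encode q) \<notin> snd (lex_pairs r) \<or>
      \<phi> = Pos (Eq (prod_encode p) (prod_encode q)) \<and> prod_encode p = prod_encode q \<or>
      \<phi> = Neg (Eq (prod_encode p) (prod_encode q)) \<and> prod_encode p \<noteq> prod_encode q"
    if "p \<in> admissible r" "q \<in> admissible r" for p q \<phi>
    using not_in_lex_prod_iff[OF assms admissible_Field[OF that(1)] admissible_Field[OF that(2)]]
    unfolding lex_sentence_def snd_lex_pairs_iff[OF that] prod_encode_eq by blast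
  then show ?thesis
    unfolding set_eq_iff mem_diag_iff fst_lex_pairs bex_simps(7) gamma_sentence_def mem_Collect_eq
    by blast
qed

section \<open>Enumerability of the operator\<close>

lemma code_basic_inj: "inj code_basic"
proof (rule injI)
  have code_atom_eq: "code_atom x = code_atom y \<Longrightarrow> x = y" for x y
    by (cases x; cases y) (simp_all, presburger+)
  fix \<phi> \<psi>
  show "code_basic \<phi> = code_basic \<psi> \<Longrightarrow> \<phi> = \<psi>"
    by (cases \<phi>; cases \<psi>) (simp_all add: code_atom_eq, presburger+)
qed

lemma code_basic_surj: "surj code_basic"
proof -
  have halves: "n = (if even n then 2 * (n div 2) else 2 * (n div 2) + 1)" for n :: nat
    by presburger
  have "\<exists>x. n = code_atom x" for n
  proof -
    obtain a b where "prod_decode (n div 2) = (a, b)" by fastforce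
    then have "n div 2 = prod_encode (a, b)" by (metis prod_decode_inverse)
    then have "n = code_atom (if even n then Lt a b else Eq a b)"
      by (subst halves) simp
    then show ?thesis by blast
  qed
  then have "\<exists>\<phi>. n = code_basic \<phi>" for n
    by (subst halves) (metis code_basic.simps)
  then show ?thesis by (metis surjI)
qed

definition lt_rel_of_code :: "nat \<Rightarrow> nat rel" where
  "lt_rel_of_code c = {(x, y). 4 * prod_encode (x, y) \<in> set_decode c}"

lemma lt_rel_of_code_canon:
  "finite \<alpha> \<Longrightarrow> lt_rel_of_code (canon (code_basic ` \<alpha>)) = {(x, y). Pos (Lt x y) \<in> \<alpha>}"
proof -
  have "4 * prod_encode (x, y) \<in> code_basic ` \<alpha> \<longleftrightarrow> Pos (Lt x y) \<in> \<alpha>" for x y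
    using inj_image_mem_iff[OF code_basic_inj, of "Pos (Lt x y)"] by simp
  moreover assume "finite \<alpha>"
  ultimately show ?thesis
    unfolding lt_rel_of_code_def canon_def set_encode_def[symmetric] by simp
qed

lemma less_of_mem_set_decode: "k \<in> set_decode c \<Longrightarrow> k < c"
proof -
  assume "k \<in> set_decode c"
  then have "2 ^ k \<le> c" unfolding mem_set_decode_iff by auto
  moreover have "k < 2 ^ k" by (rule less_exp)
  ultimately show ?thesis by linarith
qed

lemma lt_rel_of_code_bounded: "lt_rel_of_code c \<subseteq> {..<c} \<times> {..<c}"
proof (rule subrelI)
  fix x y
  assume "(x, y) \<in> lt_rel_of_code c"
  then have "4 * prod_encode (x, y) < c"
    unfolding lt_rel_of_code_def by (simp add: less_of_mem_set_decode)
  then show "(x, y) \<in> {..<c} \<times> {..<c}"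
    using le_prod_encode_1[of x y] le_prod_encode_2[of y x] by auto
qed

lemma coded_Gamma:
  "(\<lambda>(\<alpha>, \<phi>). prod_encode (canon (code_basic ` \<alpha>), code_basic \<phi>)) ` Gamma
     = {prod_encode (c, code_basic \<phi>) | c \<phi>. gamma_sentence (lt_rel_of_code c) \<phi>}"
proof (intro set_eqI iffI)
  fix n
  assume "n \<in> (\<lambda>(\<alpha>, \<phi>). prod_encode (canon (code_basic ` \<alpha>), code_basic \<phi>)) ` Gamma"
  then obtain \<alpha> \<phi> where "n = prod_encode (canon (code_basic ` \<alpha>), code_basic \<phi>)"
    and "finite \<alpha>" "gamma_sentence {(x, y). Pos (Lt x y) \<in> \<alpha>} \<phi>"
    unfolding Gamma_def by auto
  then show "n \<in> {prod_encode (c, code_basic \<phi>) | c \<phi>. gamma_sentence (lt_rel_of_code c) \<phi>}"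
    by (auto simp: lt_rel_of_code_canon)
next
  fix n
  assume "n \<in> {prod_encode (c, code_basic \<phi>) | c \<phi>. gamma_sentence (lt_rel_of_code c) \<phi>}"
  then obtain c \<phi> where n: "n = prod_encode (c, code_basic \<phi>)" and "gamma_sentence (lt_rel_of_code c) \<phi>"
    by blast
  define \<alpha> where "\<alpha> = code_basic -` set_decode c"
  have "finite \<alpha>"
    unfolding \<alpha>_def using finite_vimageI[OF finite_set_decode code_basic_inj] .
  moreover have c: "canon (code_basic ` \<alpha>) = c"
    unfolding \<alpha>_def canon_def set_encode_def[symmetric]
    by (simp add: code_basic_surj)
  ultimately have "(\<alpha>, \<phi>) \<in> Gamma"
    using \<open>gamma_sentence (lt_rel_of_code c) \<phi>\<close> lt_rel_of_code_canon[of \<alpha>] by (simp add: Gamma_def)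
  then show "n \<in> (\<lambda>(\<alpha>, \<phi>). prod_encode (canon (code_basic ` \<alpha>), code_basic \<phi>)) ` Gamma"
    unfolding n using c by force
qed

definition lex_code :: "nat rel \<Rightarrow> nat \<times> nat \<Rightarrow> nat \<times> nat \<Rightarrow> nat \<Rightarrow> bool" where
  "lex_code r p q d \<longleftrightarrow> (let k = 4 * prod_encode (prod_encode p, prod_encode q) in
     d = k \<and> (p, q) \<in> r <*lex*> r \<or> d = k + 1 \<and> ((q, p) \<in> r <*lex*> r \<or> p = q) \<or>
     d = k + 2 \<and> p = q \<or> d = k + 3 \<and> p \<noteq> q)"

lemma lex_sentence_iff_lex_code: "lex_sentence r p q \<phi> \<longleftrightarrow> lex_code r p q (code_basic \<phi>)"
proof -
  have "\<phi> = \<psi> \<longleftrightarrow> code_basic \<phi> = code_basic \<psi>" for \<psi>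
    using code_basic_inj by (auto dest: injD)
  then show ?thesis
    unfolding lex_sentence_def lex_code_def Let_def by (simp add: numeral_3_eq_3)
qed

lemma gamma_sentence_bounded:
  assumes "r \<subseteq> {..<c} \<times> {..<c}"
  shows "gamma_sentence r \<phi> \<longleftrightarrow> (\<exists>a\<le>c. \<exists>w\<le>c. \<exists>t\<le>a. \<exists>a'\<le>c. \<exists>w'\<le>c. \<exists>t'\<le>a'.
     t < a \<and> between r t w a \<and> t' < a' \<and> between r t' w' a' \<and>
     lex_code r (a, w) (a', w') (code_basic \<phi>))" (is "_ \<longleftrightarrow> ?bounded")
proof
  have bound: "a \<le> c \<and> w \<le> c" if "between r t w a" for t w a
    using that assms unfolding between_def by fastforce
  assume "gamma_sentence r \<phi>"
  then obtain a w t a' w' t' where "t < a" "between r t w a" "t' < a'" "between r t' w' a'"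
    and "lex_code r (a, w) (a', w') (code_basic \<phi>)"
    unfolding gamma_sentence_def admissible_def lex_sentence_iff_lex_code by blast
  with bound[of t w a] bound[of t' w' a'] show ?bounded
    by (meson less_imp_le)
next
  assume ?bounded
  then show "gamma_sentence r \<phi>"
    unfolding gamma_sentence_def admissible_def lex_sentence_iff_lex_code by blast
qed

definition Negate :: "nexp \<Rightarrow> nexp" where
  "Negate e = Minus (Const 1) (Sgn e)"

lemma holds_Negate [simp]: "holds (Negate e) xs \<longleftrightarrow> \<not> holds e xs"
  by (simp add: Negate_def holds_def)

lemma wf_nexp_Negate [simp]: "wf_nexp k (Negate e) \<longleftrightarrow> wf_nexp k e"
  by (simp add: Negate_def)

text \<open>In the expressions below, variable 1 holds the code of the finite set of input sentences.\<close>

definition LtE :: "nat \<Rightarrow> nat \<Rightarrow> nat \<Rightarrow> nexp" where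
  "LtE j x y = Mem j (Times (Const 4) (Pair (Var x) (Var y))) (Var 1)"

definition BetweenE :: "nat \<Rightarrow> nat \<Rightarrow> nat \<Rightarrow> nat \<Rightarrow> nexp" where
  "BetweenE j t w a = Disj (Conj (LtE j t w) (LtE j w a)) (Conj (LtE j a w) (LtE j w t))"

definition LexCodeE :: "nat \<Rightarrow> nat \<Rightarrow> nat \<Rightarrow> nat \<Rightarrow> nat \<Rightarrow> nat \<Rightarrow> nexp" where
  "LexCodeE j a w a' w' d = (let
     k = Times (Const 4) (Pair (Pair (Var a) (Var w)) (Pair (Var a') (Var w')));
     less = Disj (LtE j a a') (Conj (Equal (Var a) (Var a')) (LtE j w w'));
     greater = Disj (LtE j a' a) (Conj (Equal (Var a') (Var a)) (LtE j w' w));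
     same = Conj (Equal (Var a) (Var a')) (Equal (Var w) (Var w'))
   in Disj (Conj (Equal (Var d) k) less)
       (Disj (Conj (Equal (Var d) (Plus k (Const 1))) (Disj greater same))
       (Disj (Conj (Equal (Var d) (Plus k (Const 2))) same)
             (Conj (Equal (Var d) (Plus k (Const 3))) (Negate same)))))"

lemma holds_LtE:
  "length xs = j \<Longrightarrow> x < j \<Longrightarrow> y < j \<Longrightarrow> 1 < j \<Longrightarrow>
    holds (LtE j x y) xs \<longleftrightarrow> (xs ! x, xs ! y) \<in> lt_rel_of_code (xs ! 1)"
  unfolding LtE_def lt_rel_of_code_def by (subst holds_Mem) auto

lemma holds_BetweenE:
  "length xs = j \<Longrightarrow> t < j \<Longrightarrow> w < j \<Longrightarrow> a < j \<Longrightarrow> 1 < j \<Longrightarrow>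
    holds (BetweenE j t w a) xs \<longleftrightarrow> between (lt_rel_of_code (xs ! 1)) (xs ! t) (xs ! w) (xs ! a)"
  unfolding BetweenE_def between_def by (simp add: holds_LtE)

lemma holds_LexCodeE:
  "length xs = j \<Longrightarrow> a < j \<Longrightarrow> w < j \<Longrightarrow> a' < j \<Longrightarrow> w' < j \<Longrightarrow> d < j \<Longrightarrow> 1 < j \<Longrightarrow>
    holds (LexCodeE j a w a' w' d) xs \<longleftrightarrow>
      lex_code (lt_rel_of_code (xs ! 1)) (xs ! a, xs ! w) (xs ! a', xs ! w') (xs ! d)"
  unfolding LexCodeE_def lex_code_def Let_def by (simp add: holds_LtE)

lemma wf_nexp_LtE [simp]: "j \<le> k \<Longrightarrow> x < k \<Longrightarrow> y < k \<Longrightarrow> 1 < k \<Longrightarrow> wf_nexp k (LtE j x y)"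
  by (simp add: LtE_def)

lemma wf_nexp_BetweenE [simp]:
  "j \<le> k \<Longrightarrow> t < k \<Longrightarrow> w < k \<Longrightarrow> a < k \<Longrightarrow> 1 < k \<Longrightarrow> wf_nexp k (BetweenE j t w a)"
  by (simp add: BetweenE_def)

lemma wf_nexp_LexCodeE [simp]:
  "j \<le> k \<Longrightarrow> a < k \<Longrightarrow> w < k \<Longrightarrow> a' < k \<Longrightarrow> w' < k \<Longrightarrow> d < k \<Longrightarrow> 1 < k \<Longrightarrow>
    wf_nexp k (LexCodeE j a w a' w' d)"
  by (simp add: LexCodeE_def Let_def)

text \<open>The variables of the body are \<open>n, c, d, a, w, t, a', w', t'\<close> in this order.\<close>
definition Gamma_nexp :: nexp where
  "Gamma_nexp =
     Bex (Var 0) (Bex (Var 0) (Conj (Equal (Var 0) (Pair (Var 1) (Var 2)))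
       (Bex (Var 1) (Bex (Var 1) (Bex (Var 3) (Bex (Var 1) (Bex (Var 1) (Bex (Var 6)
         (Conj (Less (Var 5) (Var 3)) (Conj (BetweenE 9 5 4 3)
         (Conj (Less (Var 8) (Var 6)) (Conj (BetweenE 9 8 7 6) (LexCodeE 9 3 4 6 7 2)))))))))))))"

lemma holds_Gamma_nexp:
  "holds Gamma_nexp [n] \<longleftrightarrow> (\<exists>c\<le>n. \<exists>d\<le>n. n = prod_encode (c, d) \<and>
     (\<exists>a\<le>c. \<exists>w\<le>c. \<exists>t\<le>a. \<exists>a'\<le>c. \<exists>w'\<le>c. \<exists>t'\<le>a'.
       t < a \<and> between (lt_rel_of_code c) t w a \<and> t' < a' \<and> between (lt_rel_of_code c) t' w' a' \<and>
       lex_code (lt_rel_of_code c) (a, w) (a', w') d))"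
  unfolding Gamma_nexp_def by (simp add: holds_BetweenE holds_LexCodeE)

lemma coded_Gamma_holds: "{prod_encode (c, code_basic \<phi>) | c \<phi>. gamma_sentence (lt_rel_of_code c) \<phi>}
  = {n. holds Gamma_nexp [n]}"
proof (intro set_eqI iffI)
  fix n
  assume "n \<in> {prod_encode (c, code_basic \<phi>) | c \<phi>. gamma_sentence (lt_rel_of_code c) \<phi>}"
  then obtain c \<phi> where "n = prod_encode (c, code_basic \<phi>)" "gamma_sentence (lt_rel_of_code c) \<phi>"
    by blast
  then show "n \<in> {n. holds Gamma_nexp [n]}"
    unfolding mem_Collect_eq holds_Gamma_nexp gamma_sentence_bounded[OF lt_rel_of_code_bounded]
    using le_prod_encode_1 le_prod_encode_2 by blast
next
  fix n
  assume "n \<in> {n. holds Gamma_nexp [n]}"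
  then obtain c d where "n = prod_encode (c, d)"
    and "\<exists>a\<le>c. \<exists>w\<le>c. \<exists>t\<le>a. \<exists>a'\<le>c. \<exists>w'\<le>c. \<exists>t'\<le>a'.
       t < a \<and> between (lt_rel_of_code c) t w a \<and> t' < a' \<and> between (lt_rel_of_code c) t' w' a' \<and>
       lex_code (lt_rel_of_code c) (a, w) (a', w') d"
    unfolding mem_Collect_eq holds_Gamma_nexp by blast
  moreover obtain \<phi> where "d = code_basic \<phi>"
    using code_basic_surj by (metis surjD)
  ultimately show "n \<in> {prod_encode (c, code_basic \<phi>) | c \<phi>. gamma_sentence (lt_rel_of_code c) \<phi>}"
    unfolding gamma_sentence_bounded[OF lt_rel_of_code_bounded] by blast
qed

lemma enum_operator_Gamma: "enum_operator Gamma"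
proof -
  have "wf_nexp 1 Gamma_nexp"
    by (simp add: Gamma_nexp_def)
  then show ?thesis
    unfolding enum_operator_def coded_Gamma coded_Gamma_holds using ce_set_holds by (auto simp: Gamma_def)
qed

section \<open>Mutually embeddable well-orders\<close>

definition linear_struc :: "struc \<Rightarrow> bool" where
  "linear_struc X \<longleftrightarrow> is_struc X \<and> strict_linear_order_on (fst X) (snd X)"

lemma iso_sym: "iso X Y \<Longrightarrow> iso Y X"
proof -
  assume "iso X Y"
  then obtain f where f: "bij_betw f (fst X) (fst Y)"
    and hom: "\<forall>a\<in>fst X. \<forall>b\<in>fst X. (a, b) \<in> snd X \<longleftrightarrow> (f a, f b) \<in> snd Y"
    unfolding iso_def by blast
  have "bij_betw (inv_into (fst X) f) (fst Y) (fst X)"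
    using bij_betw_inv_into[OF f] .
  moreover have "\<forall>a\<in>fst Y. \<forall>b\<in>fst Y. (a, b) \<in> snd Y \<longleftrightarrow> (inv_into (fst X) f a, inv_into (fst X) f b) \<in> snd X"
    using hom f by (auto simp: bij_betw_inv_into_right bij_betw_def inv_into_into)
  ultimately show ?thesis
    unfolding iso_def by blast
qed

lemma iso_trans: "iso X Y \<Longrightarrow> iso Y Z \<Longrightarrow> iso X Z"
proof -
  assume "iso X Y" "iso Y Z"
  then obtain f h where f: "bij_betw f (fst X) (fst Y)" and h: "bij_betw h (fst Y) (fst Z)"
    and "\<forall>a\<in>fst X. \<forall>b\<in>fst X. (a, b) \<in> snd X \<longleftrightarrow> (f a, f b) \<in> snd Y"
    and "\<forall>a\<in>fst Y. \<forall>b\<in>fst Y. (a, b) \<in> snd Y \<longleftrightarrow> (h a, h b) \<in> snd Z"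
    unfolding iso_def by blast
  moreover from f h have "bij_betw (h \<circ> f) (fst X) (fst Z)"
    by (rule bij_betw_trans)
  ultimately show ?thesis
    unfolding iso_def by (intro exI[of _ "h \<circ> f"]) (auto dest: bij_betwE)
qed

definition refl_order :: "struc \<Rightarrow> nat rel" where
  "refl_order X = snd X \<union> Id_on (fst X)"

lemma Field_refl_order: "is_struc X \<Longrightarrow> Field (refl_order X) = fst X"
  by (auto simp: refl_order_def is_struc_def Field_def)

lemma refl_order_minus_Id: "linear_struc X \<Longrightarrow> refl_order X - Id = snd X"
  by (auto simp: refl_order_def linear_struc_def strict_linear_order_on_def irrefl_def)

lemma Well_order_refl_order:
  assumes "linear_struc X" "wf (snd X)"
  shows "Well_order (refl_order X)"
proof -
  have "snd X \<subseteq> fst X \<times> fst X" "trans (snd X)" "irrefl (snd X)" "total_on (fst X) (snd X)"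
    using assms(1) by (auto simp: linear_struc_def is_struc_def strict_linear_order_on_def)
  then have "linear_order_on (fst X) (refl_order X)"
    unfolding refl_order_def linear_order_on_def partial_order_on_def preorder_on_def refl_on_def
      antisym_def trans_def irrefl_def total_on_def
    by blast
  moreover have "wf (refl_order X - Id)"
    using assms by (simp add: refl_order_minus_Id)
  ultimately show ?thesis
    using assms(1) by (simp add: well_order_on_def Field_refl_order linear_struc_def)
qed

lemma iso_if_refl_order_iso:
  assumes X: "linear_struc X" and Y: "linear_struc Y"
    and h: "BNF_Wellorder_Embedding.iso (refl_order X) (refl_order Y) h"
  shows "iso X Y"
proof -
  have sX: "is_struc X" and sY: "is_struc Y"
    using X Y by (simp_all add: linear_struc_def)
  from h have bij: "bij_betw h (fst X) (fst Y)"
    and hom: "\<forall>a\<in>fst X. \<forall>b\<in>fst X. (a, b) \<in> refl_order X \<longleftrightarrow> (h a, h b) \<in> refl_order Y"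
    unfolding iso_iff2 Field_refl_order[OF sX] Field_refl_order[OF sY] by auto
  have "(a, b) \<in> snd X \<longleftrightarrow> (h a, h b) \<in> snd Y" if "a \<in> fst X" "b \<in> fst X" for a b
  proof -
    have "a = b \<longleftrightarrow> h a = h b"
      using bij that unfolding bij_betw_def inj_on_def by blast
    then show ?thesis
      using hom that unfolding refl_order_minus_Id[OF X, symmetric] refl_order_minus_Id[OF Y, symmetric]
      by auto
  qed
  with bij show ?thesis
    unfolding iso_def by blast
qed

lemma Well_order_inflationary:
  assumes r: "Well_order r" and h_Field: "h ` Field r \<subseteq> Field r"
    and h_mono: "\<And>x y. (x, y) \<in> r - Id \<Longrightarrow> (h x, h y) \<in> r - Id"
  shows "x \<in> Field r \<Longrightarrow> (x, h x) \<in> r"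
proof (induction x rule: wf_induct[OF conjunct2[OF r[unfolded well_order_on_def]]])
  case (1 x)
  have total: "total_on (Field r) r" and anti: "antisym r" and refl: "refl_on (Field r) r"
    using r unfolding well_order_on_def linear_order_on_def partial_order_on_def preorder_on_def by auto
  show ?case
  proof (rule ccontr)
    assume not_above: "(x, h x) \<notin> r"
    have "h x \<in> Field r"
      using h_Field 1(2) by blast
    moreover have "h x \<noteq> x"
      using not_above refl 1(2) unfolding refl_on_def by auto
    ultimately have hx_below: "(h x, x) \<in> r - Id"
      using total not_above 1(2) unfolding total_on_def by blast
    then have "(h x, h (h x)) \<in> r"
      using 1(1) \<open>h x \<in> Field r\<close> by blast
    moreover have "(h (h x), h x) \<in> r - Id"
      using h_mono[OF hx_below] .
    ultimately show False
      using anti unfolding antisym_def by blast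
  qed
qed

lemma embed_iso_if_strict_mono_back:
  assumes r: "Well_order r" and s: "Well_order s" and f: "embed r s f"
    and g_Field: "g ` Field s \<subseteq> Field r"
    and g_mono: "\<And>x y. (x, y) \<in> s - Id \<Longrightarrow> (g x, g y) \<in> r - Id"
  shows "BNF_Wellorder_Embedding.iso r s f"
proof -
  have inj: "inj_on f (Field r)"
    using embed_inj_on[OF r f] .
  have f_mono: "(f x, f y) \<in> s - Id" if "(x, y) \<in> r - Id" for x y
  proof -
    have "x \<in> Field r" "y \<in> Field r" using that by (auto intro: FieldI1 FieldI2)
    then show ?thesis
      using embed_compat[OF f] that inj unfolding compat_def inj_on_def by blast
  qed
  have ofilter: "wo_rel.ofilter s (f ` Field r)"
    using embed_Field_ofilter[OF r s f] .
  then have f_Field: "f ` Field r \<subseteq> Field s"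
    and down: "\<And>a. a \<in> f ` Field r \<Longrightarrow> under s a \<subseteq> f ` Field r"
    unfolding wo_rel.ofilter_def[OF s[unfolded wo_rel_def[symmetric]]] by auto
  have "Field s \<subseteq> f ` Field r"
  proof
    fix y
    assume y: "y \<in> Field s"
    have "(y, (f \<circ> g) y) \<in> s"
      by (rule Well_order_inflationary[OF s _ _ y]) (use g_Field f_Field g_mono f_mono in auto)
    moreover have "(f \<circ> g) y \<in> f ` Field r"
      using g_Field y by auto
    ultimately show "y \<in> f ` Field r"
      using down unfolding under_def by blast
  qed
  with inj f_Field have "bij_betw f (Field r) (Field s)"
    unfolding bij_betw_def by blast
  with f show ?thesis
    unfolding BNF_Wellorder_Embedding.iso_def by simp
qed

lemma iso_if_strict_mono_both_ways:
  assumes X: "linear_struc X" and Y: "linear_struc Y" and wfY: "wf (snd Y)"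
    and f_dom: "f ` fst X \<subseteq> fst Y" and f_mono: "\<And>x y. (x, y) \<in> snd X \<Longrightarrow> (f x, f y) \<in> snd Y"
    and g_dom: "g ` fst Y \<subseteq> fst X" and g_mono: "\<And>x y. (x, y) \<in> snd Y \<Longrightarrow> (g x, g y) \<in> snd X"
  shows "iso X Y"
proof -
  have "snd X \<subseteq> inv_image (snd Y) f"
    using f_mono by auto
  then have wfX: "wf (snd X)"
    using wf_subset[OF wf_inv_image[OF wfY]] by blast
  have sX: "is_struc X" and sY: "is_struc Y"
    using X Y by (simp_all add: linear_struc_def)
  note rX = Well_order_refl_order[OF X wfX] and rY = Well_order_refl_order[OF Y wfY]
  note Fields = Field_refl_order[OF sX] Field_refl_order[OF sY]
  note strict = refl_order_minus_Id[OF X] refl_order_minus_Id[OF Y]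
  from wellorders_totally_ordered[OF rX rY] show ?thesis
  proof (elim disjE exE)
    fix h
    assume "embed (refl_order X) (refl_order Y) h"
    then have "BNF_Wellorder_Embedding.iso (refl_order X) (refl_order Y) h"
      by (rule embed_iso_if_strict_mono_back[OF rX rY]) (use g_dom g_mono in \<open>simp_all add: Fields strict\<close>)
    then show ?thesis
      using iso_if_refl_order_iso[OF X Y] by blast
  next
    fix h
    assume "embed (refl_order Y) (refl_order X) h"
    then have "BNF_Wellorder_Embedding.iso (refl_order Y) (refl_order X) h"
      by (rule embed_iso_if_strict_mono_back[OF rY rX]) (use f_dom f_mono in \<open>simp_all add: Fields strict\<close>)
    then show ?thesis
      using iso_if_refl_order_iso[OF Y X] iso_sym by blast
  qed
qed

section \<open>The image of \<open>\<omega>\<^sup>2\<close>\<close>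

abbreviation lex2 :: "((nat \<times> nat) \<times> nat \<times> nat) set" where
  "lex2 \<equiv> less_than <*lex*> less_than"

lemma fst_omega2 [simp]: "fst omega2 = UNIV"
  by (simp add: omega2_def)

lemma fst_omega3 [simp]: "fst omega3 = UNIV"
  by (simp add: omega3_def)

lemma snd_omega2: "snd omega2 = inv_image lex2 prod_decode"
  unfolding omega2_def by (auto simp: Let_def case_prod_beta lex_prod_def)

lemma snd_omega3: "snd omega3 = inv_image (less_than <*lex*> lex2) dec3"
  unfolding omega3_def by (auto simp: Let_def case_prod_beta lex_prod_def)

lemma omega2_eq: "omega2 = (UNIV, inv_image lex2 prod_decode)"
  by (simp add: prod_eq_iff snd_omega2)

lemma omega3_eq: "omega3 = (UNIV, inv_image (less_than <*lex*> lex2) dec3)"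
  by (simp add: prod_eq_iff snd_omega3)

declare dec3.simps [simp del]

lemma dec3_prod_encode [simp]: "dec3 (prod_encode (m, prod_encode (n, p))) = (m, n, p)"
  by (simp add: dec3.simps)

lemma inj_dec3: "inj dec3"
proof (rule injI)
  fix x y
  assume "dec3 x = dec3 y"
  then have "fst (prod_decode x) = fst (prod_decode y)" "snd (prod_decode x) = snd (prod_decode y)"
    by (auto simp: dec3.simps case_prod_beta dest: injD[OF inj_prod_decode])
  then show "x = y"
    by (metis prod.collapse prod_decode_inverse)
qed

lemma strict_linear_order_lex2: "strict_linear_order lex2"
  by (simp add: strict_linear_order_on_def irrefl_less_than total_less_than)

lemma linear_struc_inv_image:
  assumes "strict_linear_order R" "inj f"
  shows "linear_struc (UNIV, inv_image R f)"
  using assms total_inv_image[of f R]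
  by (auto simp: linear_struc_def is_struc_def strict_linear_order_on_def trans_inv_image irrefl_def)

lemma linear_struc_omega3: "linear_struc omega3"
proof -
  have "strict_linear_order (less_than <*lex*> lex2)"
    using strict_linear_order_lex2
    by (simp add: strict_linear_order_on_def irrefl_less_than total_less_than)
  then show ?thesis
    unfolding omega3_eq by (rule linear_struc_inv_image[OF _ inj_dec3])
qed

lemma wf_omega3: "wf (snd omega3)"
  unfolding snd_omega3 by (intro wf_inv_image wf_lex_prod wf_less_than)

lemma linear_struc_lex_pairs:
  assumes "strict_linear_order_on (Field r) r"
  shows "linear_struc (lex_pairs r)"
proof -
  have "trans r" "irrefl r" "total_on (Field r) r"
    using assms by (auto simp: strict_linear_order_on_def)
  then have lex: "trans (r <*lex*> r)" "irrefl (r <*lex*> r)" "total_on (Field r \<times> Field r) (r <*lex*> r)"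
    by simp_all
  have "trans (snd (lex_pairs r))"
  proof (rule transI)
    fix x y z
    assume "(x, y) \<in> snd (lex_pairs r)" "(y, z) \<in> snd (lex_pairs r)"
    then obtain p q q' s where "p \<in> admissible r" "s \<in> admissible r" "x = prod_encode p" "z = prod_encode s"
      "prod_encode q = prod_encode q'" "(p, q) \<in> r <*lex*> r" "(q', s) \<in> r <*lex*> r"
      unfolding mem_snd_lex_pairs by metis
    then show "(x, z) \<in> snd (lex_pairs r)"
      unfolding mem_snd_lex_pairs prod_encode_eq using transD[OF lex(1)] by blast
  qed
  moreover have "irrefl (snd (lex_pairs r))"
  proof (rule irreflI)
    fix x
    show "(x, x) \<notin> snd (lex_pairs r)"
    proof
      assume "(x, x) \<in> snd (lex_pairs r)"
      then obtain p q where "prod_encode p = prod_encode q" "(p, q) \<in> r <*lex*> r"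
        unfolding mem_snd_lex_pairs by metis
      then have "(p, p) \<in> r <*lex*> r"
        by (simp add: prod_encode_eq)
      with lex(2) show False
        unfolding irrefl_def by blast
    qed
  qed
  moreover have "total_on (fst (lex_pairs r)) (snd (lex_pairs r))"
  proof (rule total_onI)
    fix x y
    assume "x \<in> fst (lex_pairs r)" "y \<in> fst (lex_pairs r)" "x \<noteq> y"
    then obtain p q where "p \<in> admissible r" "q \<in> admissible r" "x = prod_encode p" "y = prod_encode q" "p \<noteq> q"
      by (auto simp: lex_pairs_def)
    moreover from this have "(p, q) \<in> r <*lex*> r \<or> (q, p) \<in> r <*lex*> r"
      using lex(3) admissible_Field unfolding total_on_def by blast
    ultimately show "(x, y) \<in> snd (lex_pairs r) \<or> (y, x) \<in> snd (lex_pairs r)"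
      unfolding mem_snd_lex_pairs by blast
  qed
  moreover have "snd (lex_pairs r) \<subseteq> fst (lex_pairs r) \<times> fst (lex_pairs r)"
    by (auto simp: lex_pairs_def)
  ultimately show ?thesis
    unfolding linear_struc_def is_struc_def strict_linear_order_on_def by blast
qed

locale omega2_presentation =
  fixes D :: "nat set" and g :: "nat \<Rightarrow> nat \<times> nat"
  assumes bij_g: "bij_betw g D UNIV"
begin

definition R :: "nat rel" where
  "R = {(x, y). x \<in> D \<and> y \<in> D \<and> (g x, g y) \<in> lex2}"

abbreviation block :: "nat \<Rightarrow> nat" where
  "block x \<equiv> fst (g x)"

definition elem :: "nat \<times> nat \<Rightarrow> nat" where
  "elem = inv_into D g"

lemma elem_in [simp]: "elem p \<in> D"
  unfolding elem_def using bij_g by (metis UNIV_I bij_betw_def inv_into_into)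

lemma g_elem [simp]: "g (elem p) = p"
  unfolding elem_def using bij_g by (simp add: bij_betw_inv_into_right)

lemma elem_g [simp]: "x \<in> D \<Longrightarrow> elem (g x) = x"
  unfolding elem_def using bij_g by (simp add: bij_betw_inv_into_left)

lemma g_eq_iff: "x \<in> D \<Longrightarrow> y \<in> D \<Longrightarrow> g x = g y \<longleftrightarrow> x = y"
  using bij_g unfolding bij_betw_def inj_on_def by blast

lemma R_iff: "(x, y) \<in> R \<longleftrightarrow> x \<in> D \<and> y \<in> D \<and> (g x, g y) \<in> lex2"
  by (simp add: R_def)

lemma strict_linear_order_on_R: "strict_linear_order_on D R"
proof -
  have "total_on D R"
  proof (rule total_onI)
    fix x y
    assume "x \<in> D" "y \<in> D" "x \<noteq> y"
    then have "g x \<noteq> g y" by (simp add: g_eq_iff)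
    then show "(x, y) \<in> R \<or> (y, x) \<in> R"
      using \<open>x \<in> D\<close> \<open>y \<in> D\<close> strict_linear_order_lex2
      unfolding R_iff strict_linear_order_on_def total_on_def by blast
  qed
  moreover have "trans R"
    using strict_linear_order_lex2 unfolding strict_linear_order_on_def trans_def R_iff by blast
  moreover have "irrefl R"
    using strict_linear_order_lex2 unfolding strict_linear_order_on_def irrefl_def R_iff by blast
  ultimately show ?thesis
    unfolding strict_linear_order_on_def by blast
qed

lemma Field_R_subset: "Field R \<subseteq> D"
  by (auto simp: Field_def R_iff)

lemma strict_linear_order_on_Field_R: "strict_linear_order_on (Field R) R"
  using strict_linear_order_on_R total_on_subset[OF _ Field_R_subset]
  by (auto simp: strict_linear_order_on_def)

definition least :: nat where
  "least = (LEAST x. x \<in> D)"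

lemma least_in: "least \<in> D"
  unfolding least_def using elem_in by (rule LeastI)

lemma least_le: "x \<in> D \<Longrightarrow> least \<le> x"
  unfolding least_def by (rule Least_le)

text \<open>The witness is \<open>least\<close> itself.\<close>
lemma admissible_above_least: "(elem (block least + 2 + m, n), elem (block least + 1, p)) \<in> admissible R"
proof -
  let ?a = "elem (block least + 2 + m, n)" and ?w = "elem (block least + 1, p)"
  have "block ?a \<noteq> block least"
    by simp
  then have "least \<noteq> ?a"
    by metis
  then have "least < ?a"
    using least_le[OF elem_in] by (simp add: order_less_le)
  moreover have "between R least ?w ?a"
    using least_in by (cases "g least") (simp add: between_def R_iff)
  ultimately show ?thesis
    unfolding admissible_def by blast
qed

definition omega3_to_pairs :: "nat \<Rightarrow> nat" where
  "omega3_to_pairs x = (case dec3 x of (m, n, p) \<Rightarrow>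
     prod_encode (elem (block least + 2 + m, n), elem (block least + 1, p)))"

lemma omega3_to_pairs_mono:
  assumes "(x, y) \<in> snd omega3"
  shows "(omega3_to_pairs x, omega3_to_pairs y) \<in> snd (lex_pairs R)"
proof -
  obtain m n p m' n' p' where x: "dec3 x = (m, n, p)" and y: "dec3 y = (m', n', p')"
    by (metis prod.collapse)
  have "((elem (block least + 2 + m, n), elem (block least + 1, p)),
         (elem (block least + 2 + m', n'), elem (block least + 1, p'))) \<in> R <*lex*> R"
    using assms by (auto simp: snd_omega3 x y R_iff g_eq_iff[symmetric])
  then show ?thesis
    unfolding mem_snd_lex_pairs omega3_to_pairs_def x y prod.case using admissible_above_least by blast
qed

lemma block_mono: "(x, y) \<in> R \<Longrightarrow> block x \<le> block y"
  by (cases "g x"; cases "g y") (auto simp: R_iff)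

definition max_block_below :: "nat \<Rightarrow> nat" where
  "max_block_below a = Max (block ` {x \<in> D. x \<le> a})"

lemma block_le_max_block_below: "x \<in> D \<Longrightarrow> x \<le> a \<Longrightarrow> block x \<le> max_block_below a"
  unfolding max_block_below_def by (rule Max_ge) auto

text \<open>This is where the numerical condition \<open>t < a\<close> is used: it makes the witness one of the
  elements counted by \<open>max_block_below a\<close>.\<close>
lemma admissible_block_le: "(a, w) \<in> admissible R \<Longrightarrow> block w \<le> max_block_below a"
proof -
  assume "(a, w) \<in> admissible R"
  then obtain t where "t < a" and "between R t w a"
    unfolding admissible_def by blast
  then consider "(t, w) \<in> R" "(w, a) \<in> R" | "(a, w) \<in> R" "(w, t) \<in> R"
    unfolding between_def by blast
  then show ?thesis
  proof cases
    case 1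
    then have "block w \<le> block a" by (simp add: block_mono)
    also have "\<dots> \<le> max_block_below a" using 1 by (auto simp: R_iff intro: block_le_max_block_below)
    finally show ?thesis .
  next
    case 2
    then have "block w \<le> block t" by (simp add: block_mono)
    also have "\<dots> \<le> max_block_below a" using 2 \<open>t < a\<close> by (auto simp: R_iff intro: block_le_max_block_below)
    finally show ?thesis .
  qed
qed

text \<open>The pairs with first component \<open>elem (m, n)\<close> are sent to the interval of width
  \<open>max_block_below (elem (m, n)) + 1\<close> starting at \<open>offset (m, n)\<close> of the middle coordinate.\<close>
definition offset :: "nat \<times> nat \<Rightarrow> nat" where
  "offset p = (\<Sum>i<snd p. max_block_below (elem (fst p, i)) + 1)"

lemma offset_mono: "n \<le> n' \<Longrightarrow> offset (m, n) \<le> offset (m, n')"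
  unfolding offset_def by (simp add: sum_mono2)

lemma offset_block_less:
  assumes "(a, w) \<in> admissible R" "g a = (m, n)" "n < n'"
  shows "offset (m, n) + block w < offset (m, n')"
proof -
  have "a \<in> D"
    using assms(1) admissible_Field Field_R_subset by blast
  then have "block w \<le> max_block_below (elem (m, n))"
    using admissible_block_le[OF assms(1)] assms(2) by (metis elem_g)
  then have "offset (m, n) + block w < offset (m, Suc n)"
    by (simp add: offset_def)
  also have "\<dots> \<le> offset (m, n')"
    using assms(3) by (intro offset_mono) simp
  finally show ?thesis .
qed

definition pairs_to_omega3 :: "nat \<Rightarrow> nat" where
  "pairs_to_omega3 e = (case prod_decode e of (a, w) \<Rightarrow>
     prod_encode (block a, prod_encode (offset (g a) + block w, snd (g w))))"

lemma pairs_to_omega3_mono: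
  assumes "(x, y) \<in> snd (lex_pairs R)"
  shows "(pairs_to_omega3 x, pairs_to_omega3 y) \<in> snd omega3"
proof -
  obtain a w a' w' where x: "x = prod_encode (a, w)" and y: "y = prod_encode (a', w')"
    and adm: "(a, w) \<in> admissible R" and lex: "((a, w), (a', w')) \<in> R <*lex*> R"
    using assms unfolding mem_snd_lex_pairs by auto
  obtain m n where a: "g a = (m, n)" by fastforce
  obtain m' n' where a': "g a' = (m', n')" by fastforce
  have "((m, offset (m, n) + block w, snd (g w)), (m', offset (m', n') + block w', snd (g w')))
      \<in> less_than <*lex*> lex2"
    using lex
  proof (elim in_lex_prod[THEN iffD1, elim_format] disjE conjE)
    assume "(a, a') \<in> R"
    then have "m < m' \<or> m = m' \<and> n < n'"
      by (simp add: R_iff a a')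
    then show ?thesis
      using offset_block_less[OF adm a, of n'] by auto
  next
    assume "a = a'" "(w, w') \<in> R"
    then show ?thesis
      using a a' by (cases "g w"; cases "g w'") (auto simp: R_iff)
  qed
  then show ?thesis
    by (simp add: snd_omega3 pairs_to_omega3_def x y a a')
qed

theorem iso_lex_pairs_omega3: "iso (lex_pairs R) omega3"
proof (rule iso_if_strict_mono_both_ways[OF linear_struc_lex_pairs[OF strict_linear_order_on_Field_R]
      linear_struc_omega3 wf_omega3])
  show "pairs_to_omega3 ` fst (lex_pairs R) \<subseteq> fst omega3"
    by simp
  show "omega3_to_pairs ` fst omega3 \<subseteq> fst (lex_pairs R)"
    using admissible_above_least by (auto simp: fst_lex_pairs omega3_to_pairs_def split: prod.split)
qed (simp_all add: pairs_to_omega3_mono omega3_to_pairs_mono)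

end

section \<open>Reversal and the main theorem\<close>

lemma fst_reverse [simp]: "fst (reverse X) = fst X"
  by (simp add: reverse_def)

lemma snd_reverse [simp]: "snd (reverse X) = (snd X)\<inverse>"
  by (auto simp: reverse_def)

lemma reverse_reverse [simp]: "reverse (reverse X) = X"
  by (simp add: prod_eq_iff)

lemma is_struc_reverse [simp]: "is_struc (reverse X) \<longleftrightarrow> is_struc X"
  by (auto simp: is_struc_def)

lemma iso_reverse: "iso X Y \<Longrightarrow> iso (reverse X) (reverse Y)"
  by (auto simp: iso_def)

lemma lex_pairs_converse: "lex_pairs (r\<inverse>) = reverse (lex_pairs r)"
proof -
  have "r\<inverse> <*lex*> r\<inverse> = (r <*lex*> r)\<inverse>"
    by (auto simp: lex_prod_def)
  then show ?thesis
    by (auto simp: lex_pairs_def prod_eq_iff)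
qed

definition has_least :: "struc \<Rightarrow> bool" where
  "has_least X \<longleftrightarrow> (\<exists>x\<in>fst X. \<forall>y\<in>fst X. y \<noteq> x \<longrightarrow> (x, y) \<in> snd X)"

lemma has_least_iso: "iso X Y \<Longrightarrow> has_least X \<Longrightarrow> has_least Y"
proof -
  assume "iso X Y" "has_least X"
  then obtain f x where f: "bij_betw f (fst X) (fst Y)"
    and hom: "\<forall>a\<in>fst X. \<forall>b\<in>fst X. (a, b) \<in> snd X \<longleftrightarrow> (f a, f b) \<in> snd Y"
    and x: "x \<in> fst X" "\<forall>y\<in>fst X. y \<noteq> x \<longrightarrow> (x, y) \<in> snd X"
    unfolding iso_def has_least_def by blast
  have "(f x, z) \<in> snd Y" if "z \<in> fst Y" "z \<noteq> f x" for z
  proof -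
    obtain y where "y \<in> fst X" "z = f y"
      using f \<open>z \<in> fst Y\<close> unfolding bij_betw_def by auto
    with x hom that show ?thesis by auto
  qed
  moreover have "f x \<in> fst Y"
    using f x(1) by (auto dest: bij_betwE)
  ultimately show ?thesis
    unfolding has_least_def by blast
qed

lemma has_least_lex:
  assumes "f z = (0, b)" "inj f" "\<And>c. c \<noteq> b \<Longrightarrow> (b, c) \<in> R"
  shows "has_least (UNIV, inv_image (less_than <*lex*> R) f)"
proof -
  have "(f z, f y) \<in> less_than <*lex*> R" if "y \<noteq> z" for y
  proof -
    have "f y \<noteq> (0, b)"
      using assms(1,2) that by (metis injD)
    then show ?thesis
      using assms(1,3) by (cases "f y") auto
  qed
  then show ?thesis
    unfolding has_least_def by auto
qed

lemma not_has_least_reverse_lex: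
  assumes "surj f"
  shows "\<not> has_least (reverse (UNIV, inv_image (less_than <*lex*> R) f))"
proof
  assume "has_least (reverse (UNIV, inv_image (less_than <*lex*> R) f))"
  then obtain x where x: "\<And>y. y \<noteq> x \<Longrightarrow> (f y, f x) \<in> less_than <*lex*> R"
    unfolding has_least_def by auto
  obtain y where y: "f y = (Suc (fst (f x)), snd (f x))"
    using assms by (metis surjD)
  then have "y \<noteq> x"
    by (metis Suc_n_not_n fst_conv)
  with x[OF this] y show False
    by (cases "f x") auto
qed

lemma not_iso_omega2_reverse: "\<not> iso omega2 (reverse omega2)"
proof
  assume iso: "iso omega2 (reverse omega2)"
  have "prod_decode 0 = (0, 0)"
    by (simp add: prod_decode_def prod_decode_aux.simps)
  then have "has_least omega2"
    unfolding omega2_eq by (rule has_least_lex[OF _ inj_prod_decode]) simp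
  then have "has_least (reverse omega2)"
    by (rule has_least_iso[OF iso])
  moreover have "\<not> has_least (reverse omega2)"
    unfolding omega2_eq by (rule not_has_least_reverse_lex[OF surj_prod_decode])
  ultimately show False
    by contradiction
qed

lemma not_iso_omega3_reverse: "\<not> iso omega3 (reverse omega3)"
proof
  assume iso: "iso omega3 (reverse omega3)"
  have "dec3 0 = (0, 0, 0)"
    by (simp add: dec3.simps prod_decode_def prod_decode_aux.simps)
  then have "has_least omega3"
    unfolding omega3_eq by (rule has_least_lex[OF _ inj_dec3]) auto
  then have "has_least (reverse omega3)"
    by (rule has_least_iso[OF iso])
  moreover have "surj dec3"
    by (rule surjI[of _ "\<lambda>(m, n, p). prod_encode (m, prod_encode (n, p))"]) auto
  then have "\<not> has_least (reverse omega3)"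
    unfolding omega3_eq by (rule not_has_least_reverse_lex)
  ultimately show False
    by contradiction
qed

lemma class2_iso_iff:
  assumes "\<not> iso P Q" "A \<in> class2 P Q" "B \<in> class2 P Q"
  shows "iso A B \<longleftrightarrow> (iso A P \<longleftrightarrow> iso B P)"
proof -
  have A: "iso A P \<or> iso A Q" and B: "iso B P \<or> iso B Q"
    using assms(2,3) unfolding class2_def by auto
  have not_both: "\<not> (iso X P \<and> iso X Q)" for X
    using assms(1) iso_sym iso_trans by metis
  show ?thesis
  proof
    assume "iso A B"
    then show "iso A P \<longleftrightarrow> iso B P"
      using iso_sym iso_trans by metis
  next
    assume "iso A P \<longleftrightarrow> iso B P"
    then have "iso A P \<and> iso B P \<or> iso A Q \<and> iso B Q"
      using A B not_both by blast
    then show "iso A B"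
      using iso_sym iso_trans by metis
  qed
qed

lemma diag_inject:
  assumes "is_struc X" "is_struc Y" "diag X = diag Y"
  shows "X = Y"
proof -
  have dom: "a \<in> fst Z \<longleftrightarrow> Pos (Eq a a) \<in> diag Z" for a Z
    by (auto simp: diag_def)
  have rel: "(a, b) \<in> snd Z \<longleftrightarrow> Pos (Lt a b) \<in> diag Z" if "is_struc Z" for a b Z
    using that by (auto simp: diag_def is_struc_def)
  have "fst X = fst Y"
    using assms(3) unfolding set_eq_iff dom by simp
  moreover have "snd X = snd Y"
    using assms unfolding set_eq_iff by (simp add: rel split_paired_all)
  ultimately show ?thesis
    by (simp add: prod_eq_iff)
qed

lemma omega2_presentation_of_iso:
  assumes "is_struc A" "iso A omega2"
  obtains g where "omega2_presentation (fst A) g" "snd A = omega2_presentation.R (fst A) g"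
proof -
  obtain f where f: "bij_betw f (fst A) UNIV"
    and hom: "\<forall>a\<in>fst A. \<forall>b\<in>fst A. (a, b) \<in> snd A \<longleftrightarrow> (f a, f b) \<in> snd omega2"
    using assms(2) unfolding iso_def by auto
  have pres: "omega2_presentation (fst A) (prod_decode \<circ> f)"
    by unfold_locales (rule bij_betw_trans[OF f bij_prod_decode])
  moreover have "snd A = omega2_presentation.R (fst A) (prod_decode \<circ> f)"
    using assms(1) hom unfolding omega2_presentation.R_def[OF pres]
    by (auto simp: is_struc_def snd_omega2)
  ultimately show ?thesis
    using that by blast
qed

lemma lex_pairs_if_iso_omega2:
  assumes "is_struc A" "iso A omega2"
  shows "iso (lex_pairs (snd A)) omega3" "strict_linear_order_on (Field (snd A)) (snd A)"
proof -
  obtain g where pres: "omega2_presentation (fst A) g" and A: "snd A = omega2_presentation.R (fst A) g"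
    using omega2_presentation_of_iso[OF assms] .
  interpret omega2_presentation "fst A" g
    by (fact pres)
  show "iso (lex_pairs (snd A)) omega3" "strict_linear_order_on (Field (snd A)) (snd A)"
    unfolding A by (rule iso_lex_pairs_omega3 strict_linear_order_on_Field_R)+
qed

lemma lex_pairs_if_iso_reverse_omega2:
  assumes "is_struc A" "iso A (reverse omega2)"
  shows "iso (lex_pairs (snd A)) (reverse omega3)" "strict_linear_order_on (Field (snd A)) (snd A)"
proof -
  have "iso (reverse A) omega2"
    using iso_reverse[OF assms(2)] by simp
  then have "iso (lex_pairs ((snd A)\<inverse>)) omega3" and lin: "strict_linear_order_on (Field ((snd A)\<inverse>)) ((snd A)\<inverse>)"
    using lex_pairs_if_iso_omega2[of "reverse A"] assms(1) by simp_all
  then show "iso (lex_pairs (snd A)) (reverse omega3)"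
    using iso_reverse by (fastforce simp: lex_pairs_converse)
  show "strict_linear_order_on (Field (snd A)) (snd A)"
    using lin by (simp add: strict_linear_order_on_def)
qed

lemma Gamma_on_omega2_class:
  assumes "A \<in> class2 omega2 (reverse omega2)"
  shows "apply_op Gamma (diag A) = diag (lex_pairs (snd A))"
    and "lex_pairs (snd A) \<in> class2 omega3 (reverse omega3)"
    and "iso (lex_pairs (snd A)) omega3 \<longleftrightarrow> iso A omega2"
proof -
  have A: "is_struc A" "iso A omega2 \<or> iso A (reverse omega2)"
    using assms unfolding class2_def by auto
  then have "strict_linear_order_on (Field (snd A)) (snd A)"
    using lex_pairs_if_iso_omega2 lex_pairs_if_iso_reverse_omega2 by blast
  then show "apply_op Gamma (diag A) = diag (lex_pairs (snd A))"
    using A(1) by (simp add: apply_op_Gamma Lt_pairs_diag diag_lex_pairs)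
  show "lex_pairs (snd A) \<in> class2 omega3 (reverse omega3)"
    using A is_struc_lex_pairs lex_pairs_if_iso_omega2 lex_pairs_if_iso_reverse_omega2
    unfolding class2_def by blast
  show "iso (lex_pairs (snd A)) omega3 \<longleftrightarrow> iso A omega2"
  proof
    assume F: "iso (lex_pairs (snd A)) omega3"
    show "iso A omega2"
    proof (rule ccontr)
      assume "\<not> iso A omega2"
      with A have "iso (lex_pairs (snd A)) (reverse omega3)"
        using lex_pairs_if_iso_reverse_omega2(1) by blast
      then have "iso omega3 (reverse omega3)"
        using iso_trans[OF iso_sym[OF F]] by blast
      with not_iso_omega3_reverse show False ..
    qed
  next
    assume "iso A omega2"
    with A(1) show "iso (lex_pairs (snd A)) omega3"
      by (rule lex_pairs_if_iso_omega2(1))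
  qed
qed

lemma Gamma_output_eq:
  assumes "A \<in> class2 omega2 (reverse omega2)" "C \<in> class2 omega3 (reverse omega3)"
    and "apply_op Gamma (diag A) = diag C"
  shows "C = lex_pairs (snd A)"
proof -
  have "is_struc C"
    using assms(2) by (simp add: class2_def)
  then show ?thesis
    using diag_inject[OF _ is_struc_lex_pairs] assms(3) Gamma_on_omega2_class(1)[OF assms(1)] by metis
qed

theorem theorem6p2:
  shows "class2 omega2 (reverse omega2) \<le>\<^sub>c class2 omega3 (reverse omega3)"
  unfolding c_reducible_def computable_embedding_def
proof (intro exI[of _ Gamma] conjI ballI impI)
  show "enum_operator Gamma"
    by (rule enum_operator_Gamma)
next
  fix A
  assume "A \<in> class2 omega2 (reverse omega2)"
  then show "\<exists>C\<in>class2 omega3 (reverse omega3). apply_op Gamma (diag A) = diag C"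
    using Gamma_on_omega2_class(1,2) by blast
next
  fix A B CA CB
  assume A: "A \<in> class2 omega2 (reverse omega2)" and B: "B \<in> class2 omega2 (reverse omega2)"
    and CA: "CA \<in> class2 omega3 (reverse omega3)" and CB: "CB \<in> class2 omega3 (reverse omega3)"
    and "apply_op Gamma (diag A) = diag CA" "apply_op Gamma (diag B) = diag CB"
  then have "CA = lex_pairs (snd A)" "CB = lex_pairs (snd B)"
    by (simp_all add: Gamma_output_eq)
  then show "iso A B \<longleftrightarrow> iso CA CB"
    using class2_iso_iff[OF not_iso_omega2_reverse A B] class2_iso_iff[OF not_iso_omega3_reverse CA CB]
      Gamma_on_omega2_class(3)[OF A] Gamma_on_omega2_class(3)[OF B] by simp
qed

end
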